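(* Let $W\in[0,1]^{k\times k}$ be a symmetric positive semidefinite matrix with unit diagonal, let $\mu>0$, and consider the collaborative learning problem with strategy space $\mathbb{R}_+^k$, utilities $u_i({\boldsymbol\theta})=W_i^\top{\boldsymbol\theta}$ ($W_i$ the $i$-th column of $W$) and thresholds $\mu_i=\mu$ for all $i\in[k]$. Let ${\boldsymbol\theta}^{\mathrm{eq}}$ be an optimal stable equilibrium, let $I=\{i:\theta^{\mathrm{eq}}_i=0\}$, and let $\bar W$ and $\bar{\boldsymbol\theta}^{\mathrm{eq}}$ be the restrictions of $W$ (rows and columns) and ${\boldsymbol\theta}^{\mathrm{eq}}$ to the index set $[k]\setminus I$. Then $\bar{\boldsymbol\theta}^{\mathrm{eq}}$ is a socially optimal solution for the agents in $[k]\setminus I$ with utilities $u_i(\bar{\boldsymbol\theta})=\bar W_i^\top\bar{\boldsymbol\theta}$ and threshold $\mu$, i.e. it is an optimal solution of $\min\{\mathbf{1}^\top{\bf x}:\bar W{\bf x}\ge\mu\mathbf{1},\ {\bf x}\ge\mathbf{0}\}$. Furthermore, for any socially optimal solution $\bar{\boldsymbol\theta}$ for the agents $[k]\setminus I$, its extension $\tilde{\boldsymbol\theta}\in\mathbb{R}_+^k$ defined by $\tilde\theta_i=0$ for $i\in I$ and $\tilde\theta_i=\bar\theta_i$ otherwise is an optimal stable equilibrium for the agents $[k]$.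
   Context: ${\boldsymbol\theta}$ is feasible if $u_i({\boldsymbol\theta})\ge\mu_i$ for all $i$. A feasible ${\boldsymbol\theta}\in\mathbb{R}_+^k$ is a stable equilibrium if for no $i$ is there $0\le\theta_i'<\theta_i$ with $u_i(\theta_i',{\boldsymbol\theta}_{-i})\ge\mu_i$ (${\boldsymbol\theta}$ with $i$-th entry replaced by $\theta_i'$). An optimal stable equilibrium is a stable equilibrium minimizing $\mathbf{1}^\top{\boldsymbol\theta}$. A socially optimal solution minimizes $\mathbf{1}^\top{\boldsymbol\theta}$ over all feasible ${\boldsymbol\theta}\ge\mathbf{0}$. *)

theory Defs
  imports Complex_Main
begin

text \<open>A strategy profile is a
  function theta :: nat => real, nonnegative on A and zero outside A (so profiles
  are exactly the elements of R_+^A).\<close>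

definition strategies :: "nat set \<Rightarrow> (nat \<Rightarrow> real) set" where
  "strategies A = {\<theta>. (\<forall>i\<in>A. 0 \<le> \<theta> i) \<and> (\<forall>i. i \<notin> A \<longrightarrow> \<theta> i = 0)}"

definition util :: "nat set \<Rightarrow> (nat \<Rightarrow> nat \<Rightarrow> real) \<Rightarrow> (nat \<Rightarrow> real) \<Rightarrow> nat \<Rightarrow> real" where
  "util A W \<theta> i = (\<Sum>j\<in>A. W j i * \<theta> j)"

definition feasible :: "nat set \<Rightarrow> (nat \<Rightarrow> nat \<Rightarrow> real) \<Rightarrow> real \<Rightarrow> (nat \<Rightarrow> real) \<Rightarrow> bool" where
  "feasible A W \<mu> \<theta> \<longleftrightarrow> \<theta> \<in> strategies A \<and> (\<forall>i\<in>A. util A W \<theta> i \<ge> \<mu>)"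

definition stable_eq :: "nat set \<Rightarrow> (nat \<Rightarrow> nat \<Rightarrow> real) \<Rightarrow> real \<Rightarrow> (nat \<Rightarrow> real) \<Rightarrow> bool" where
  "stable_eq A W \<mu> \<theta> \<longleftrightarrow> feasible A W \<mu> \<theta> \<and>
     (\<forall>i\<in>A. \<not> (\<exists>t. 0 \<le> t \<and> t < \<theta> i \<and> util A W (\<theta>(i := t)) i \<ge> \<mu>))"

definition optimal_stable_eq :: "nat set \<Rightarrow> (nat \<Rightarrow> nat \<Rightarrow> real) \<Rightarrow> real \<Rightarrow> (nat \<Rightarrow> real) \<Rightarrow> bool" where
  "optimal_stable_eq A W \<mu> \<theta> \<longleftrightarrow> stable_eq A W \<mu> \<theta> \<and>
     (\<forall>\<theta>'. stable_eq A W \<mu> \<theta>' \<longrightarrow> sum \<theta> A \<le> sum \<theta>' A)"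

definition socially_optimal :: "nat set \<Rightarrow> (nat \<Rightarrow> nat \<Rightarrow> real) \<Rightarrow> real \<Rightarrow> (nat \<Rightarrow> real) \<Rightarrow> bool" where
  "socially_optimal A W \<mu> \<theta> \<longleftrightarrow> feasible A W \<mu> \<theta> \<and>
     (\<forall>\<theta>'. feasible A W \<mu> \<theta>' \<longrightarrow> sum \<theta> A \<le> sum \<theta>' A)"

definition psd_on :: "nat set \<Rightarrow> (nat \<Rightarrow> nat \<Rightarrow> real) \<Rightarrow> bool" where
  "psd_on K W \<longleftrightarrow> (\<forall>x :: nat \<Rightarrow> real. 0 \<le> (\<Sum>i\<in>K. \<Sum>j\<in>K. x i * W i j * x j))"

end

theory Submission
  imports Defs
begin

text \<open>On the support S of an optimal stable equilibrium every agent is tight,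
  W_S theta_S = mu 1: an agent with slack could lower its own contribution, because its
  diagonal weight is positive. As W_S is symmetric, theta_S is then also a feasible point
  of the dual of the covering LP min {1'x : W_S x >= mu 1, x >= 0}, and weak duality
  mu 1'x = theta_S' W_S x >= mu 1'theta_S gives its social optimality. Conversely,
  complementary slackness makes every socially optimal x tight on S as well, so
  d = x - theta_S satisfies d' W d = 0, and positive semidefiniteness yields W d = 0 on all
  of [k]. Thus the extension of x gives every agent the same utility as theta: it is a
  stable equilibrium, of the same total cost. The entry bounds 0 <= W i j <= 1 are not
  needed.\<close>

lemma util_fun_upd:
  assumes "finite A" "i \<in> A"
  shows "util A W (\<theta>(i := t)) j = util A W \<theta> j + W i j * (t - \<theta> i)"
  using assms by (simp add: util_def sum.remove algebra_simps)

lemma util_diff: "util A W (\<lambda>j. x j - y j) i = util A W x i - util A W y i"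
  by (simp add: util_def sum_subtractf right_diff_distrib)

lemma util_restrict:
  assumes "finite K" "S \<subseteq> K" "\<forall>j\<in>K - S. \<theta> j = 0"
  shows "util K W \<theta> i = util S W \<theta> i"
  unfolding util_def by (rule sum.mono_neutral_right) (use assms in auto)

lemma sum_mult_util_commute:
  assumes "\<forall>i\<in>S. \<forall>j\<in>S. W i j = W j i"
  shows "(\<Sum>i\<in>S. x i * util S W y i) = (\<Sum>j\<in>S. y j * util S W x j)"
proof -
  have "(\<Sum>i\<in>S. x i * util S W y i) = (\<Sum>i\<in>S. \<Sum>j\<in>S. x i * W j i * y j)"
    unfolding util_def by (simp add: sum_distrib_left mult.assoc)
  also have "\<dots> = (\<Sum>j\<in>S. \<Sum>i\<in>S. x i * W j i * y j)" by (rule sum.swap)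
  also have "\<dots> = (\<Sum>j\<in>S. y j * util S W x j)"
    unfolding util_def sum_distrib_left
    by (intro sum.cong refl) (use assms in auto)
  finally show ?thesis .
qed

lemma strategies_mono: "S \<subseteq> K \<Longrightarrow> strategies S \<subseteq> strategies K"
  unfolding strategies_def by auto

lemma support_strategies:
  assumes "\<theta> \<in> strategies K"
  shows "\<theta> \<in> strategies {i\<in>K. \<theta> i \<noteq> 0}" "\<forall>i\<in>{i\<in>K. \<theta> i \<noteq> 0}. 0 < \<theta> i"
  using assms unfolding strategies_def by (auto simp: order.strict_iff_order)

lemma psd_on_iff_util:
  "psd_on K W \<longleftrightarrow> (\<forall>x. 0 \<le> (\<Sum>i\<in>K. x i * util K W x i))"
proof -
  have "(\<Sum>i\<in>K. \<Sum>j\<in>K. x i * W i j * x j) = (\<Sum>j\<in>K. x j * util K W x j)" for x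
    unfolding util_def sum_distrib_left by (subst sum.swap) (simp add: algebra_simps)
  then show ?thesis unfolding psd_on_def by simp
qed

lemma linear_coeff_zero_if_quadratic_nonneg:
  fixes a c :: real
  assumes "\<And>t. 0 \<le> a * t + c * t\<^sup>2"
  shows "a = 0"
proof (rule ccontr)
  assume "a \<noteq> 0"
  define s where "s = \<bar>c\<bar> + 1"
  have "s > 0" "c < s" unfolding s_def by auto
  have "a * (- a / s) + c * (- a / s)\<^sup>2 = a\<^sup>2 / s * (c / s - 1)"
    using \<open>s > 0\<close> by (simp add: field_simps power2_eq_square)
  also have "\<dots> < 0"
    using \<open>a \<noteq> 0\<close> \<open>s > 0\<close> \<open>c < s\<close> by (intro mult_pos_neg) auto
  finally show False using assms[of "- a / s"] by simp
qed

lemma psd_on_util_eq_0: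
  assumes "finite K" "psd_on K W" and sym: "\<forall>i\<in>K. \<forall>j\<in>K. W i j = W j i"
    and form_0: "(\<Sum>j\<in>K. d j * util K W d j) = 0" and "i \<in> K"
  shows "util K W d i = 0"
proof -
  define x where "x t = d(i := d i + t)" for t
  have "(\<Sum>j\<in>K. x t j * util K W (x t) j) = 2 * util K W d i * t + W i i * t\<^sup>2" for t
  proof -
    have "(\<Sum>j\<in>K. d j * W i j) = util K W d i"
      using sym \<open>i \<in> K\<close> by (simp add: util_def mult.commute)
    then show ?thesis
      using form_0 assms
      by (simp add: x_def util_fun_upd sum.remove algebra_simps sum.distrib
          sum_distrib_left[symmetric] power2_eq_square)
  qed
  moreover have "0 \<le> (\<Sum>j\<in>K. x t j * util K W (x t) j)" for t
    using \<open>psd_on K W\<close> by (simp add: psd_on_iff_util)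
  ultimately have "2 * util K W d i = 0"
    by (intro linear_coeff_zero_if_quadratic_nonneg[of _ "W i i"]) metis
  then show ?thesis by simp
qed

lemma util_eq_on_superset_if_psd:
  assumes "finite K" "S \<subseteq> K" "psd_on K W" and sym: "\<forall>i\<in>K. \<forall>j\<in>K. W i j = W j i"
    and x_out: "\<forall>j\<in>K - S. x j = 0" and y_out: "\<forall>j\<in>K - S. y j = 0"
    and util_eq: "\<forall>j\<in>S. util S W x j = util S W y j" and "i \<in> K"
  shows "util K W x i = util K W y i"
proof -
  define d where "d = (\<lambda>j. x j - y j)"
  have d_out: "\<forall>j\<in>K - S. d j = 0" using x_out y_out by (simp add: d_def)
  have "(\<Sum>j\<in>K. d j * util K W d j) = (\<Sum>j\<in>S. d j * util S W d j)"
    using assms d_out by (simp add: sum.mono_neutral_right[of K S] util_restrict[of K S d])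
  also have "\<dots> = 0" using util_eq by (simp add: d_def util_diff[of S W x y])
  finally have "util K W d i = 0"
    using psd_on_util_eq_0 assms by blast
  then show ?thesis by (simp add: d_def util_diff[of K W x y])
qed

lemma stable_eq_iff_tight_on_support:
  assumes "finite A" "\<forall>i\<in>A. 0 < W i i"
  shows "stable_eq A W \<mu> \<theta> \<longleftrightarrow>
    feasible A W \<mu> \<theta> \<and> (\<forall>i\<in>A. 0 < \<theta> i \<longrightarrow> util A W \<theta> i = \<mu>)"
proof (intro iffI conjI ballI impI; (elim conjE)?)
  assume stable: "stable_eq A W \<mu> \<theta>"
  then show "feasible A W \<mu> \<theta>" unfolding stable_eq_def by simp
  fix i assume "i \<in> A" "0 < \<theta> i"
  have ge: "\<mu> \<le> util A W \<theta> i"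
    using stable \<open>i \<in> A\<close> unfolding stable_eq_def feasible_def by simp
  define t where "t = max 0 (\<theta> i - (util A W \<theta> i - \<mu>) / W i i)"
  have "0 < W i i" using assms \<open>i \<in> A\<close> by simp
  have "\<theta> i - (util A W \<theta> i - \<mu>) / W i i \<le> t" unfolding t_def by simp
  then have "\<mu> - util A W \<theta> i \<le> W i i * (t - \<theta> i)"
    using \<open>0 < W i i\<close> by (simp add: field_simps)
  then have "\<mu> \<le> util A W (\<theta>(i := t)) i"
    by (simp add: util_fun_upd[OF \<open>finite A\<close> \<open>i \<in> A\<close>])
  moreover have "0 \<le> t" unfolding t_def by simp
  ultimately have "\<not> t < \<theta> i" using stable \<open>i \<in> A\<close> unfolding stable_eq_def by blast
  then show "util A W \<theta> i = \<mu>"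
    using ge \<open>0 < \<theta> i\<close> \<open>0 < W i i\<close> by (auto simp: t_def field_simps)
next
  assume feasible: "feasible A W \<mu> \<theta>"
    and tight: "\<forall>i\<in>A. 0 < \<theta> i \<longrightarrow> util A W \<theta> i = \<mu>"
  show "stable_eq A W \<mu> \<theta>"
    unfolding stable_eq_def
  proof (intro conjI feasible ballI notI; elim exE conjE)
    fix i t assume "i \<in> A" "0 \<le> t" "t < \<theta> i" "\<mu> \<le> util A W (\<theta>(i := t)) i"
    moreover have "0 < W i i" using assms(2) \<open>i \<in> A\<close> by simp
    ultimately have "util A W (\<theta>(i := t)) i < util A W \<theta> i"
      by (simp add: util_fun_upd[OF \<open>finite A\<close> \<open>i \<in> A\<close>] mult_pos_neg)
    then show False
      using tight \<open>i \<in> A\<close> \<open>t < \<theta> i\<close> \<open>0 \<le> t\<close> \<open>\<mu> \<le> util A W (\<theta>(i := t)) i\<close> by auto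
  qed
qed

lemma stable_eq_tight_on_support:
  assumes "finite K" "\<forall>i\<in>K. 0 < W i i" "stable_eq K W \<mu> y"
  shows "\<forall>j\<in>{i\<in>K. y i \<noteq> 0}. util {i\<in>K. y i \<noteq> 0} W y j = \<mu>"
proof
  fix j assume j: "j \<in> {i\<in>K. y i \<noteq> 0}"
  have "y \<in> strategies K" using assms(3) unfolding stable_eq_def feasible_def by simp
  then have "0 < y j" using support_strategies(2) j by blast
  then have "util K W y j = \<mu>"
    using assms(3) j stable_eq_iff_tight_on_support[of K W, OF assms(1,2)] by simp
  moreover have "util K W y j = util {i\<in>K. y i \<noteq> 0} W y j"
    using \<open>finite K\<close> by (intro util_restrict) auto
  ultimately show "util {i\<in>K. y i \<noteq> 0} W y j = \<mu>" by simp
qed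

lemma stable_eq_if_util_eq:
  assumes "finite K" "\<forall>i\<in>K. 0 < W i i" "stable_eq K W \<mu> y" "x \<in> strategies K"
    and "\<forall>i\<in>K. util K W x i = util K W y i" "\<forall>i\<in>K. 0 < x i \<longrightarrow> 0 < y i"
  shows "stable_eq K W \<mu> x"
proof -
  have "feasible K W \<mu> y" "\<forall>i\<in>K. 0 < y i \<longrightarrow> util K W y i = \<mu>"
    using assms(3) stable_eq_iff_tight_on_support[of K W, OF assms(1,2)] by simp_all
  then have "feasible K W \<mu> x \<and> (\<forall>i\<in>K. 0 < x i \<longrightarrow> util K W x i = \<mu>)"
    using assms(4-6) unfolding feasible_def by simp
  then show ?thesis using stable_eq_iff_tight_on_support[of K W, OF assms(1,2)] by simp
qed

lemma socially_optimal_if_tight: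
  assumes sym: "\<forall>i\<in>S. \<forall>j\<in>S. W i j = W j i" and "0 < \<mu>"
    and "y \<in> strategies S" and tight: "\<forall>j\<in>S. util S W y j = \<mu>"
  shows "socially_optimal S W \<mu> y"
  unfolding socially_optimal_def
proof (intro conjI allI impI)
  show "feasible S W \<mu> y" using assms unfolding feasible_def by simp
  fix x assume "feasible S W \<mu> x"
  then have x_feasible: "\<forall>j\<in>S. \<mu> \<le> util S W x j" unfolding feasible_def by simp
  have "\<mu> * sum y S = (\<Sum>j\<in>S. y j * \<mu>)" by (simp add: sum_distrib_left mult.commute)
  also have "\<dots> \<le> (\<Sum>j\<in>S. y j * util S W x j)"
    using \<open>y \<in> strategies S\<close> x_feasible
    by (intro sum_mono mult_left_mono) (auto simp: strategies_def)
  also have "\<dots> = (\<Sum>i\<in>S. x i * util S W y i)" by (rule sum_mult_util_commute[OF sym, symmetric])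
  also have "\<dots> = \<mu> * sum x S" using tight by (simp add: sum_distrib_left mult.commute)
  finally show "sum y S \<le> sum x S" using \<open>0 < \<mu>\<close> by simp
qed

lemma complementary_slackness_tight:
  assumes "finite S" and sym: "\<forall>i\<in>S. \<forall>j\<in>S. W i j = W j i"
    and y_pos: "\<forall>j\<in>S. 0 < y j" and y_tight: "\<forall>j\<in>S. util S W y j = \<mu>"
    and "feasible S W \<mu> x" "sum x S = sum y S"
  shows "\<forall>j\<in>S. util S W x j = \<mu>"
proof -
  have slack_nonneg: "\<forall>j\<in>S. 0 \<le> y j * (util S W x j - \<mu>)"
    using \<open>feasible S W \<mu> x\<close> y_pos unfolding feasible_def by auto
  have "(\<Sum>j\<in>S. y j * (util S W x j - \<mu>)) = (\<Sum>j\<in>S. y j * util S W x j) - \<mu> * sum y S"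
    by (simp add: right_diff_distrib sum_subtractf sum_distrib_left mult.commute)
  also have "(\<Sum>j\<in>S. y j * util S W x j) = (\<Sum>i\<in>S. x i * util S W y i)"
    by (rule sum_mult_util_commute[OF sym, symmetric])
  also have "\<dots> = \<mu> * sum x S" using y_tight by (simp add: sum_distrib_left mult.commute)
  finally have "(\<Sum>j\<in>S. y j * (util S W x j - \<mu>)) = 0" using \<open>sum x S = sum y S\<close> by simp
  then have "\<forall>j\<in>S. y j * (util S W x j - \<mu>) = 0"
    using sum_nonneg_eq_0_iff[OF \<open>finite S\<close>, of "\<lambda>j. y j * (util S W x j - \<mu>)"] slack_nonneg
    by simp
  then show ?thesis using y_pos by fastforce
qed

lemma socially_optimal_on_support:
  assumes "finite K" and sym: "\<forall>i\<in>K. \<forall>j\<in>K. W i j = W j i"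
    and "\<forall>i\<in>K. 0 < W i i" "0 < \<mu>" "stable_eq K W \<mu> y"
  shows "socially_optimal {i\<in>K. y i \<noteq> 0} W \<mu> y"
proof (rule socially_optimal_if_tight)
  have "y \<in> strategies K" using assms(5) unfolding stable_eq_def feasible_def by simp
  then show "y \<in> strategies {i\<in>K. y i \<noteq> 0}" by (rule support_strategies)
  show "\<forall>j\<in>{i\<in>K. y i \<noteq> 0}. util {i\<in>K. y i \<noteq> 0} W y j = \<mu>"
    using assms stable_eq_tight_on_support by blast
qed (use sym \<open>0 < \<mu>\<close> in auto)

lemma optimal_stable_eq_if_socially_optimal_on_support:
  assumes "finite K" "psd_on K W" and sym: "\<forall>i\<in>K. \<forall>j\<in>K. W i j = W j i"
    and diag: "\<forall>i\<in>K. 0 < W i i" and "0 < \<mu>" and y_opt: "optimal_stable_eq K W \<mu> y"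
    and x_opt: "socially_optimal {i\<in>K. y i \<noteq> 0} W \<mu> x"
  shows "optimal_stable_eq K W \<mu> x"
proof -
  define S where "S = {i\<in>K. y i \<noteq> 0}"
  have "finite S" "S \<subseteq> K" using \<open>finite K\<close> by (auto simp: S_def)
  have y_stable: "stable_eq K W \<mu> y" using y_opt unfolding optimal_stable_eq_def by simp
  then have y_strat: "y \<in> strategies K" unfolding stable_eq_def feasible_def by simp
  have y_pos: "\<forall>j\<in>S. 0 < y j" using support_strategies(2)[OF y_strat] by (simp add: S_def)
  have y_tight: "\<forall>j\<in>S. util S W y j = \<mu>"
    unfolding S_def using stable_eq_tight_on_support[OF \<open>finite K\<close> diag y_stable] .
  have y_so: "socially_optimal S W \<mu> y"
    unfolding S_def
    by (rule socially_optimal_on_support[OF \<open>finite K\<close> sym diag \<open>0 < \<mu>\<close> y_stable])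
  have x_so: "socially_optimal S W \<mu> x" using x_opt by (simp add: S_def)
  then have x_feas: "feasible S W \<mu> x" and x_strat: "x \<in> strategies S"
    unfolding socially_optimal_def feasible_def by auto
  have sum_eq: "sum x S = sum y S"
    using x_so y_so unfolding socially_optimal_def by (simp add: order_antisym)
  have x_tight: "\<forall>j\<in>S. util S W x j = \<mu>"
  proof (rule complementary_slackness_tight[OF \<open>finite S\<close> _ y_pos y_tight x_feas sum_eq])
    show "\<forall>i\<in>S. \<forall>j\<in>S. W i j = W j i" using sym \<open>S \<subseteq> K\<close> by blast
  qed
  have "x \<in> strategies K" using x_strat strategies_mono \<open>S \<subseteq> K\<close> by blast
  moreover have "\<forall>i\<in>K. util K W x i = util K W y i"
    using util_eq_on_superset_if_psd[OF \<open>finite K\<close> \<open>S \<subseteq> K\<close> \<open>psd_on K W\<close> sym]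
      x_strat x_tight y_tight unfolding S_def strategies_def by auto
  moreover have "\<forall>i\<in>K. 0 < x i \<longrightarrow> 0 < y i"
    using x_strat y_pos unfolding strategies_def by auto
  ultimately have x_stable: "stable_eq K W \<mu> x"
    by (rule stable_eq_if_util_eq[OF \<open>finite K\<close> diag y_stable])
  have "sum x K = sum y K"
    using sum_eq x_strat \<open>finite K\<close> \<open>S \<subseteq> K\<close>
    by (simp add: sum.mono_neutral_right[of K S] S_def strategies_def)
  then show ?thesis using x_stable y_opt unfolding optimal_stable_eq_def by simp
qed

theorem theorem6:
  fixes k :: nat and W :: "nat \<Rightarrow> nat \<Rightarrow> real" and \<mu> :: real
    and \<theta>eq :: "nat \<Rightarrow> real" and I :: "nat set"
  assumes W_range: "\<forall>i<k. \<forall>j<k. 0 \<le> W i j \<and> W i j \<le> 1"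
    and W_sym: "\<forall>i<k. \<forall>j<k. W i j = W j i"
    and W_psd: "psd_on {..<k} W"
    and W_diag: "\<forall>i<k. W i i = 1"
    and mu_pos: "\<mu> > 0"
    and eq: "optimal_stable_eq {..<k} W \<mu> \<theta>eq"
    and I_def: "I = {i\<in>{..<k}. \<theta>eq i = 0}"
  shows "socially_optimal ({..<k} - I) W \<mu> (\<lambda>i. if i \<in> {..<k} - I then \<theta>eq i else 0)
         \<and> (\<forall>\<theta>bar. socially_optimal ({..<k} - I) W \<mu> \<theta>bar \<longrightarrow>
               optimal_stable_eq {..<k} W \<mu> (\<lambda>i. if i \<in> {..<k} - I then \<theta>bar i else 0))"
proof -
  have support: "{..<k} - I = {i\<in>{..<k}. \<theta>eq i \<noteq> 0}" by (auto simp: I_def)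
  have sym: "\<forall>i\<in>{..<k}. \<forall>j\<in>{..<k}. W i j = W j i" and diag: "\<forall>i\<in>{..<k}. 0 < W i i"
    using W_sym W_diag by auto
  have "stable_eq {..<k} W \<mu> \<theta>eq" using eq unfolding optimal_stable_eq_def by simp
  then have eq_so: "socially_optimal ({..<k} - I) W \<mu> \<theta>eq"
    unfolding support by (rule socially_optimal_on_support[OF finite_lessThan sym diag mu_pos])
  have restrict_eq: "(\<lambda>i. if i \<in> {..<k} - I then \<theta> i else 0) = \<theta>"
    if "socially_optimal ({..<k} - I) W \<mu> \<theta>" for \<theta>
    using that unfolding socially_optimal_def feasible_def strategies_def by auto
  have "optimal_stable_eq {..<k} W \<mu> \<theta>bar"
    if "socially_optimal ({..<k} - I) W \<mu> \<theta>bar" for \<theta>bar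
    using that unfolding support
    by (rule optimal_stable_eq_if_socially_optimal_on_support
        [OF finite_lessThan W_psd sym diag mu_pos eq])
  then show ?thesis using eq_so restrict_eq by presburger
qed

end
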